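(* Let $0<\nu<1$, $0\le\mu<1$ and $\lambda>0$. Then for every $t>0$, $$\int_\lambda^\infty \frac{(u-\lambda)^{\mu}}{\Gamma(\mu+1)}\,K_{\nu,\mu}(t,u)\,du=\lambda^{(1/\nu+1)\mu-1/\nu+1}\,f_{\nu,\nu+\nu\mu+\mu}\!\left(\frac{t}{\lambda^{1/\nu}}\right).$$
   Context: For $0<\nu<1$ and real $\rho$, $f_{\nu,\rho}(t)=\frac{1}{2\pi i}\int_{c-i\infty}^{c+i\infty}e^{st}s^{-\rho}e^{-s^{\nu}}\,ds$ ($t>0$, $c>0$, principal branches). For $\mu\ge0$, $u>0$, $K_{\nu,\mu}(t,u)=\frac{1}{2\pi i}\int_{c-i\infty}^{c+i\infty}e^{st}s^{-\mu}e^{-us^{\nu}}\,ds$, the inverse Laplace transform (in $t$) of $s^{-\mu}e^{-us^\nu}$. *)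

theory Defs
  imports "HOL-Analysis.Analysis"
begin

text \<open>Bromwich (inverse Laplace) integral along the vertical line Re s = c:
  (1/(2 pi i)) * integral over s = c + i y, y in R, of e^(s t) F(s) ds, with ds = i dy.
  Complex powers use Isabelle's principal branch (powr = exp (a * Ln s)).\<close>
definition bromwich :: "real \<Rightarrow> (complex \<Rightarrow> complex) \<Rightarrow> real \<Rightarrow> complex" where
  "bromwich c F t =
     (1 / (2 * pi * \<i>)) *
     (LINT y|lborel. exp ((Complex c y) * of_real t) * F (Complex c y) * \<i>)"

definition f_nr :: "real \<Rightarrow> real \<Rightarrow> real \<Rightarrow> real \<Rightarrow> complex" where
  "f_nr c \<nu> \<rho> t = bromwich c (\<lambda>s. s powr (- of_real \<rho>) * exp (- (s powr of_real \<nu>))) t"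

definition K_nm :: "real \<Rightarrow> real \<Rightarrow> real \<Rightarrow> real \<Rightarrow> real \<Rightarrow> complex" where
  "K_nm c \<nu> \<mu> t u = bromwich c (\<lambda>s. s powr (- of_real \<mu>) * exp (- of_real u * (s powr of_real \<nu>))) t"

end

(*
  Write K(t,u) as the Bromwich integral of s^(-mu) exp(-u s^nu) and exchange the u- and
  s-integrations; Fubini applies because |exp(-u s^nu)| <= exp(-u cos(nu pi/2) |s|^nu) on the
  right half-plane. The inner integral is a shifted Laplace transform of u^mu at w = s^nu,
  int_lam^oo (u - lam)^mu exp(-u w) du = Gamma(mu+1) exp(-lam w) w^(-mu-1): Euler's integral
  for real w > 0, and by analytic continuation for Re w > 0. So the left-hand side is the
  Bromwich integral of s^(-rho) exp(-lam s^nu) with rho = nu + nu mu + mu, which the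
  substitution s = lam^(-1/nu) s' turns into lam^((rho-1)/nu) f_{nu,rho}(t / lam^(1/nu)).
  The two abscissas c1, c2 are reconciled by Cauchy's theorem on rectangles, whose horizontal
  sides vanish by the same decay bound.
*)

theory Submission
  imports Defs "HOL-Complex_Analysis.Complex_Analysis" "HOL-Probability.Sinc_Integral"
    "HOL-Real_Asymp.Real_Asymp"
begin

section \<open>Complex powers on the right half-plane\<close>

lemma Re_powr_of_real:
  fixes s :: complex and \<nu> :: real
  assumes "s \<noteq> 0"
  shows "Re (s powr of_real \<nu>) = norm s powr \<nu> * cos (\<nu> * Im (Ln s))"
  using assms by (simp add: powr_def Re_exp Re_Ln mult.commute)

lemma abs_mult_Im_Ln_bounds:
  fixes s :: complex and \<nu> :: real
  assumes "0 < Re s" "0 \<le> \<nu>" "\<nu> \<le> 1"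
  shows "\<bar>\<nu> * Im (Ln s)\<bar> \<le> \<nu> * (pi / 2)" "\<bar>\<nu> * Im (Ln s)\<bar> < pi / 2"
proof -
  have Ln: "\<bar>Im (Ln s)\<bar> < pi / 2" using Re_Ln_pos_lt_imp assms(1) .
  then show "\<bar>\<nu> * Im (Ln s)\<bar> \<le> \<nu> * (pi / 2)"
    using assms mult_left_mono[of "\<bar>Im (Ln s)\<bar>" "pi / 2" \<nu>] by (simp add: abs_mult)
  have "\<nu> * \<bar>Im (Ln s)\<bar> \<le> \<bar>Im (Ln s)\<bar>"
    using assms by (simp add: mult_left_le_one_le)
  then show "\<bar>\<nu> * Im (Ln s)\<bar> < pi / 2" using Ln assms by (simp add: abs_mult)
qed

lemma cos_mult_norm_powr_le_Re_powr:
  fixes s :: complex and \<nu> :: real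
  assumes "0 < Re s" "0 \<le> \<nu>" "\<nu> \<le> 1"
  shows "cos (\<nu> * pi / 2) * norm s powr \<nu> \<le> Re (s powr of_real \<nu>)"
proof -
  have "cos (\<nu> * pi / 2) \<le> cos \<bar>\<nu> * Im (Ln s)\<bar>"
    using abs_mult_Im_Ln_bounds[OF assms] assms by (intro cos_monotone_0_pi_le) auto
  moreover have "s \<noteq> 0" using assms by auto
  ultimately show ?thesis
    by (simp add: Re_powr_of_real mult.commute mult_left_mono)
qed

lemma Re_powr_pos:
  fixes s :: complex and \<nu> :: real
  assumes "0 < Re s" "0 \<le> \<nu>" "\<nu> \<le> 1"
  shows "0 < Re (s powr of_real \<nu>)"
proof -
  have "0 < cos \<bar>\<nu> * Im (Ln s)\<bar>"
    using abs_mult_Im_Ln_bounds[OF assms] by (intro cos_gt_zero_pi) auto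
  moreover have "s \<noteq> 0" using assms by auto
  ultimately show ?thesis by (simp add: Re_powr_of_real)
qed

lemma powr_powr_right_half_plane:
  fixes s w :: complex and \<nu> :: real
  assumes "0 < Re s" "0 \<le> \<nu>" "\<nu> \<le> 1"
  shows "(s powr of_real \<nu>) powr w = s powr (of_real \<nu> * w)"
proof -
  have "\<bar>Im (of_real \<nu> * Ln s)\<bar> < pi / 2"
    using abs_mult_Im_Ln_bounds(2)[OF assms] by simp
  then have "Ln (s powr of_real \<nu>) = of_real \<nu> * Ln s"
    using assms by (auto simp: powr_def intro!: Ln_exp)
  then show ?thesis using assms by (auto simp: powr_def mult_ac)
qed

section \<open>Stretched exponential decay\<close>

lemma powr_div_le_exp:
  fixes x p :: real
  assumes "0 \<le> x" "0 < p"
  shows "(x / p) powr p \<le> exp x"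
proof (cases "x = 0")
  case False
  then have "ln (x / p) \<le> x / p - 1" using assms by (intro ln_le_minus_one) auto
  then have "p * ln (x / p) \<le> x" using assms by (simp add: field_simps)
  then show ?thesis using assms False by (simp add: powr_def)
qed simp

lemma exp_neg_abs_powr_le:
  fixes k \<nu> y :: real
  assumes k: "0 < k" and \<nu>: "0 < \<nu>"
  shows "exp (- k * \<bar>y\<bar> powr \<nu>) \<le> (1 + (k * \<nu> / 2) powr (- 2 / \<nu>)) * inverse (1 + y\<^sup>2)"
proof -
  define C where "C = (k * \<nu> / 2) powr (- 2 / \<nu>)"
  have "(\<bar>y\<bar> powr \<nu>) powr (2 / \<nu>) = y\<^sup>2"
    using \<nu> by (simp add: powr_powr)
  moreover have "k * \<nu> / 2 * \<bar>y\<bar> powr \<nu> = k * \<bar>y\<bar> powr \<nu> / (2 / \<nu>)" by simp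
  ultimately have "(k * \<nu> / 2) powr (2 / \<nu>) * y\<^sup>2 = (k * \<bar>y\<bar> powr \<nu> / (2 / \<nu>)) powr (2 / \<nu>)"
    by (metis powr_mult)
  also have "\<dots> \<le> exp (k * \<bar>y\<bar> powr \<nu>)" using k \<nu> by (intro powr_div_le_exp) auto
  finally have tail: "y\<^sup>2 * exp (- k * \<bar>y\<bar> powr \<nu>) \<le> C"
    using k \<nu> by (simp add: C_def powr_minus exp_minus field_simps)
  have "exp (- k * \<bar>y\<bar> powr \<nu>) \<le> 1" using k by simp
  from add_mono[OF this tail]
  have "(1 + y\<^sup>2) * exp (- k * \<bar>y\<bar> powr \<nu>) \<le> 1 + C" by (simp add: distrib_right)
  then show ?thesis by (simp add: C_def field_simps add_pos_nonneg)
qed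

lemma integrable_exp_neg_abs_powr:
  fixes k \<nu> :: real
  assumes "0 < k" "0 < \<nu>"
  shows "integrable lborel (\<lambda>y. exp (- k * \<bar>y\<bar> powr \<nu>))"
proof (rule Bochner_Integration.integrable_bound)
  show "integrable lborel (\<lambda>y. (1 + (k * \<nu> / 2) powr (- 2 / \<nu>)) * inverse (1 + y\<^sup>2))"
    using integrable_inverse_1_plus_square by (simp add: set_integrable_def)
  show "AE y in lborel. norm (exp (- k * \<bar>y\<bar> powr \<nu>))
      \<le> norm ((1 + (k * \<nu> / 2) powr (- 2 / \<nu>)) * inverse (1 + y\<^sup>2))"
    using exp_neg_abs_powr_le[OF assms] by (intro AE_I2) (simp add: add_pos_nonneg)
qed simp

section \<open>Laplace transform of powers\<close>

lemma has_integral_nonneg_imp_set_integrable_lborel: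
  fixes f :: "real \<Rightarrow> real"
  assumes f: "(f has_integral I) S" and nonneg: "\<And>x. x \<in> S \<Longrightarrow> 0 \<le> f x"
    and [measurable]: "S \<in> sets borel" "f \<in> borel_measurable borel"
  shows "set_integrable lborel S f" "(LINT x:S|lborel. f x) = I"
proof -
  have "f absolutely_integrable_on S"
    using f nonneg by (intro nonnegative_absolutely_integrable_1) (auto simp: has_integral_integrable)
  moreover have "(\<lambda>x. indicat_real S x *\<^sub>R f x) \<in> borel_measurable lborel" by measurable
  ultimately show int: "set_integrable lborel S f"
    unfolding set_integrable_def by (simp add: integrable_completion)
  show "(LINT x:S|lborel. f x) = I"
    using set_borel_integral_eq_integral(2)[OF int] f by (simp add: integral_unique)
qed

lemma set_integral_powr_mult_exp_neg:
  fixes x \<mu> :: real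
  assumes x: "0 < x" and \<mu>: "-1 < \<mu>"
  shows "set_integrable lborel {0..} (\<lambda>v. v powr \<mu> * exp (- x * v))"
    and "(LINT v:{0..}|lborel. v powr \<mu> * exp (- x * v)) = Gamma (\<mu> + 1) / x powr (\<mu> + 1)"
proof -
  have "((\<lambda>t. t powr \<mu> / exp t) has_integral Gamma (\<mu> + 1)) {0..}"
    using Gamma_integral_real[of "\<mu> + 1"] \<mu> by simp
  then have G: "integrable lborel (\<lambda>t. indicat_real {0..} t *\<^sub>R (t powr \<mu> / exp t))"
    "(LBINT t. indicat_real {0..} t *\<^sub>R (t powr \<mu> / exp t)) = Gamma (\<mu> + 1)"
    using has_integral_nonneg_imp_set_integrable_lborel[of "\<lambda>t. t powr \<mu> / exp t"]
    by (auto simp: set_integrable_def set_lebesgue_integral_def)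
  have stretch: "indicat_real {0..} (0 + x * v) *\<^sub>R ((0 + x * v) powr \<mu> / exp (0 + x * v))
      = x powr \<mu> * (indicat_real {0..} v *\<^sub>R (v powr \<mu> * exp (- x * v)))" for v
    using x by (auto simp: indicator_def powr_mult exp_minus field_simps zero_le_mult_iff)
  have "integrable lborel (\<lambda>v. x powr \<mu> * (indicat_real {0..} v *\<^sub>R (v powr \<mu> * exp (- x * v))))"
    using lborel_integrable_real_affine[OF G(1), of x 0] x by (simp only: stretch)
  then show "set_integrable lborel {0..} (\<lambda>v. v powr \<mu> * exp (- x * v))"
    using x by (simp add: set_integrable_def)
  have "Gamma (\<mu> + 1) = \<bar>x\<bar> *\<^sub>R
      (LBINT v. indicat_real {0..} (0 + x * v) *\<^sub>R ((0 + x * v) powr \<mu> / exp (0 + x * v)))"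
    unfolding G(2)[symmetric] using x by (intro lborel_integral_real_affine) simp
  also have "\<dots> = x * x powr \<mu> * (LINT v:{0..}|lborel. v powr \<mu> * exp (- x * v))"
    unfolding stretch using x by (simp add: set_lebesgue_integral_def)
  finally show "(LINT v:{0..}|lborel. v powr \<mu> * exp (- x * v)) = Gamma (\<mu> + 1) / x powr (\<mu> + 1)"
    using x by (simp add: powr_mult_base field_simps)
qed

definition laplace_powr :: "real \<Rightarrow> complex \<Rightarrow> complex" where
  "laplace_powr \<mu> w = (LINT v:{0..}|lborel. of_real (v powr \<mu>) * exp (- w * of_real v))"

lemma set_integrable_of_real_powr_mult_exp:
  assumes "0 < Re w" "-1 < \<mu>" "S \<subseteq> {0..}" "S \<in> sets borel"
  shows "set_integrable lborel S (\<lambda>v. of_real (v powr \<mu>) * exp (- w * of_real v))"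
proof (rule set_integrable_subset)
  show "set_integrable lborel {0..} (\<lambda>v. of_real (v powr \<mu>) * exp (- w * of_real v))"
    using set_integral_powr_mult_exp_neg(1)[OF assms(1,2)]
  proof (rule set_integrable_bound)
    show "set_borel_measurable lborel {0..} (\<lambda>v. of_real (v powr \<mu>) * exp (- w * of_real v))"
      unfolding set_borel_measurable_def by measurable
  qed (auto simp: norm_mult)
qed (use assms in auto)

lemma laplace_powr_of_real:
  assumes "0 < x" "-1 < \<mu>"
  shows "laplace_powr \<mu> (of_real x) = of_real (Gamma (\<mu> + 1)) * of_real x powr - of_real (\<mu> + 1)"
proof -
  have "laplace_powr \<mu> (of_real x) = of_real (LINT v:{0..}|lborel. v powr \<mu> * exp (- x * v))"
    unfolding laplace_powr_def set_integral_complex_of_real[symmetric]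
    by (simp add: exp_of_real[symmetric])
  also have "\<dots> = of_real (Gamma (\<mu> + 1)) * of_real (x powr - (\<mu> + 1))"
    using set_integral_powr_mult_exp_neg(2)[OF assms] powr_minus_divide[of x "\<mu> + 1"] by simp
  also have "complex_of_real (x powr - (\<mu> + 1)) = of_real x powr - of_real (\<mu> + 1)"
    using assms(1) powr_of_real[of x "- (\<mu> + 1)"] by simp
  finally show ?thesis .
qed

lemma holomorphic_on_truncated_laplace_powr:
  assumes \<mu>: "-1 < \<mu>" and U: "convex U" "U \<subseteq> {w. 0 < Re w}"
  shows "(\<lambda>w. LINT v:{0..b}|lborel. of_real (v powr \<mu>) * exp (- w * of_real v)) holomorphic_on U"
proof -
  have int: "set_integrable lborel {0..b} (\<lambda>v. of_real (v powr \<mu>) * exp (- w * of_real v))"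
    if "w \<in> U" for w
    using that U \<mu> by (intro set_integrable_of_real_powr_mult_exp) auto
  have "(\<lambda>w. integral (cbox 0 b) (\<lambda>v. of_real (v powr \<mu>) * exp (- w * of_real v))) holomorphic_on U"
  \<comment> \<open>The derivative uses \<open>v powr (\<mu> + 1)\<close> rather than \<open>v * v powr \<mu>\<close>: both are continuous at
    \<open>v = 0\<close>, but only the former visibly so when \<open>\<mu> \<le> 0\<close>.\<close>
  proof (rule leibniz_rule_holomorphic
      [where fx = "\<lambda>w v. - of_real (v powr (\<mu> + 1)) * exp (- w * of_real v)"])
    fix w and v :: real
    assume "v \<in> cbox 0 b"
    then have "v * v powr \<mu> = v powr (\<mu> + 1)" by (simp add: powr_mult_base add.commute)
    then show "((\<lambda>w. of_real (v powr \<mu>) * exp (- w * of_real v)) has_field_derivative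
        - of_real (v powr (\<mu> + 1)) * exp (- w * of_real v)) (at w within U)"
      by (auto intro!: derivative_eq_intros simp flip: of_real_mult)
  next
    show "continuous_on (U \<times> cbox 0 b) (\<lambda>(w, v). - of_real (v powr (\<mu> + 1)) * exp (- w * of_real v))"
      using \<mu> by (auto simp: case_prod_beta intro!: continuous_intros continuous_on_powr')
  qed (use int set_borel_integral_eq_integral(1) U in auto)
  moreover have "integral (cbox 0 b) (\<lambda>v. of_real (v powr \<mu>) * exp (- w * of_real v))
      = (LINT v:{0..b}|lborel. of_real (v powr \<mu>) * exp (- w * of_real v))" if "w \<in> U" for w
    using set_borel_integral_eq_integral(2)[OF int[OF that]] by simp
  ultimately show ?thesis by (rule holomorphic_transform)
qed

lemma uniform_limit_truncated_laplace_powr: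
  assumes "0 < r" "-1 < \<mu>"
  shows "uniform_limit {w. r \<le> Re w}
    (\<lambda>b w. LINT v:{0..b}|lborel. of_real (v powr \<mu>) * exp (- w * of_real v)) (laplace_powr \<mu>) at_top"
  unfolding laplace_powr_def
proof (rule uniform_limit_set_lebesgue_integral_at_top)
  show "norm (of_real (v powr \<mu>) * exp (- w * of_real v)) \<le> v powr \<mu> * exp (- r * v)"
    if "w \<in> {w. r \<le> Re w}" "0 \<le> v" for w v
    using that by (auto simp: norm_mult intro!: mult_left_mono mult_right_mono)
  show "set_integrable lborel {0..} (\<lambda>v. v powr \<mu> * exp (- r * v))"
    using assms by (rule set_integral_powr_mult_exp_neg(1))
  show "set_borel_measurable lborel {0..} (\<lambda>v. of_real (v powr \<mu>) * exp (- w * of_real v))"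
    for w :: complex
    unfolding set_borel_measurable_def by measurable
qed auto

lemma holomorphic_laplace_powr:
  assumes \<mu>: "-1 < \<mu>"
  shows "laplace_powr \<mu> holomorphic_on {w. 0 < Re w}"
proof -
  have "laplace_powr \<mu> holomorphic_on ball w0 (Re w0 / 2)" if "0 < Re w0" for w0
  proof -
    define r where "r = Re w0 / 2"
    have r: "0 < r" using that by (simp add: r_def)
    have cball: "cball w0 r \<subseteq> {w. r \<le> Re w}"
    proof
      fix w assume "w \<in> cball w0 r"
      then have "Re (w0 - w) \<le> r" using complex_Re_le_cmod[of "w0 - w"] by (simp add: dist_norm)
      then show "w \<in> {w. r \<le> Re w}" by (simp add: r_def)
    qed
    have "\<forall>\<^sub>F b in at_top.
        continuous_on (cball w0 r) (\<lambda>w. LINT v:{0..b}|lborel. of_real (v powr \<mu>) * exp (- w * of_real v))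
      \<and> (\<lambda>w. LINT v:{0..b}|lborel. of_real (v powr \<mu>) * exp (- w * of_real v)) holomorphic_on ball w0 r"
      using holomorphic_on_truncated_laplace_powr[OF \<mu> convex_cball] cball r
      by (force intro!: always_eventually holomorphic_on_imp_continuous_on
          intro: holomorphic_on_subset[OF _ ball_subset_cball])
    moreover have "uniform_limit (cball w0 r)
      (\<lambda>b w. LINT v:{0..b}|lborel. of_real (v powr \<mu>) * exp (- w * of_real v)) (laplace_powr \<mu>) at_top"
      using uniform_limit_truncated_laplace_powr[OF r \<mu>] cball by (rule uniform_limit_on_subset)
    ultimately obtain "laplace_powr \<mu> holomorphic_on ball w0 r"
      by (rule holomorphic_uniform_limit) simp
    then show ?thesis by (simp add: r_def)
  qed
  then have "laplace_powr \<mu> analytic_on {w. 0 < Re w}"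
    unfolding analytic_on_def by (metis half_gt_zero mem_Collect_eq)
  then show ?thesis by (rule analytic_imp_holomorphic)
qed

lemma laplace_powr_eq:
  assumes w: "0 < Re w" and \<mu>: "-1 < \<mu>"
  shows "laplace_powr \<mu> w = of_real (Gamma (\<mu> + 1)) * w powr - of_real (\<mu> + 1)"
proof -
  let ?H = "{w. 0 < Re w}"
  let ?f = "\<lambda>w. laplace_powr \<mu> w - of_real (Gamma (\<mu> + 1)) * w powr - of_real (\<mu> + 1)"
  have "?f w = 0"
  proof (rule analytic_continuation[where f = ?f and S = ?H and U = "of_real ` {0<..}" and \<xi> = 1])
    show "?f holomorphic_on ?H"
      using \<mu> by (intro holomorphic_intros holomorphic_laplace_powr) (auto simp: complex_nonpos_Reals_iff)
    show "1 islimpt (of_real ` {0<..} :: complex set)"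
    proof (rule islimpt_approachable[THEN iffD2], intro allI impI)
      fix e :: real assume e: "0 < e"
      have "complex_of_real (1 + e / 2) \<in> of_real ` {0<..}"
        using e by (intro imageI) simp
      moreover have "complex_of_real (1 + e / 2) \<noteq> 1 \<and> dist (complex_of_real (1 + e / 2)) 1 < e"
        using e by (simp add: dist_norm)
      ultimately show "\<exists>z\<in>(of_real ` {0<..} :: complex set). z \<noteq> 1 \<and> dist z 1 < e" by blast
    qed
  qed (use w \<mu> laplace_powr_of_real open_halfspace_Re_gt convex_connected convex_halfspace_Re_gt in auto)
  then show ?thesis by simp
qed

lemma set_integrable_shifted_powr_exp_neg:
  fixes \<delta> \<mu> lam :: real
  assumes "0 < \<delta>" "-1 < \<mu>"
  shows "set_integrable lborel {lam..} (\<lambda>u. (u - lam) powr \<mu> * exp (- \<delta> * u))"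
proof -
  have "integrable lborel (\<lambda>u. indicat_real {0..} (- lam + 1 * u) *\<^sub>R
      ((- lam + 1 * u) powr \<mu> * exp (- \<delta> * (- lam + 1 * u))))"
    using set_integral_powr_mult_exp_neg(1)[OF assms]
    by (intro lborel_integrable_real_affine) (auto simp: set_integrable_def)
  then have "integrable lborel (\<lambda>u. exp (- \<delta> * lam) * (indicat_real {0..} (- lam + 1 * u) *\<^sub>R
      ((- lam + 1 * u) powr \<mu> * exp (- \<delta> * (- lam + 1 * u)))))"
    by (rule integrable_mult_right)
  also have "(\<lambda>u. exp (- \<delta> * lam) * (indicat_real {0..} (- lam + 1 * u) *\<^sub>R
      ((- lam + 1 * u) powr \<mu> * exp (- \<delta> * (- lam + 1 * u)))))
    = (\<lambda>u. indicat_real {lam..} u *\<^sub>R ((u - lam) powr \<mu> * exp (- \<delta> * u)))"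
    by (auto simp: fun_eq_iff indicator_def algebra_simps simp flip: exp_add)
  finally show ?thesis unfolding set_integrable_def .
qed

lemma set_integral_shifted_powr_mult_exp:
  fixes lam \<mu> :: real and w :: complex
  shows "(LINT u:{lam..}|lborel. of_real ((u - lam) powr \<mu>) * exp (- of_real u * w))
    = exp (- of_real lam * w) * laplace_powr \<mu> w"
proof -
  have "(LINT u:{lam..}|lborel. of_real ((u - lam) powr \<mu>) * exp (- of_real u * w))
    = \<bar>1\<bar> *\<^sub>R (LBINT v. indicat_real {lam..} (lam + 1 * v) *\<^sub>R
        (of_real ((lam + 1 * v - lam) powr \<mu>) * exp (- of_real (lam + 1 * v) * w)))"
    unfolding set_lebesgue_integral_def by (intro lborel_integral_real_affine) simp
  also have "\<dots> = (LBINT v. exp (- of_real lam * w) *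
      (indicat_real {0..} v *\<^sub>R (of_real (v powr \<mu>) * exp (- w * of_real v))))"
    unfolding abs_one scaleR_one by (intro Bochner_Integration.integral_cong)
       (auto simp: indicator_def algebra_simps simp flip: exp_add)
  also have "\<dots> = exp (- of_real lam * w) *
      (LINT v:{0..}|lborel. of_real (v powr \<mu>) * exp (- w * of_real v))"
    unfolding set_lebesgue_integral_def by (rule integral_mult_right_zero)
  finally show ?thesis unfolding laplace_powr_def .
qed

section \<open>Bromwich integrals\<close>

lemma tendsto_set_integral_symmetric:
  fixes f :: "real \<Rightarrow> 'a::{banach, second_countable_topology}"
  assumes f: "integrable lborel f"
  shows "((\<lambda>R. LINT y:{-R..R}|lborel. f y) \<longlongrightarrow> (LBINT y. f y)) at_top"
  unfolding set_lebesgue_integral_def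
proof (rule integral_dominated_convergence_at_top[where w = "\<lambda>y. norm (f y)"])
  show "AE y in lborel. ((\<lambda>R. indicat_real {-R..R} y *\<^sub>R f y) \<longlongrightarrow> f y) at_top"
  proof (rule AE_I2, rule tendsto_eventually)
    fix y :: real
    show "\<forall>\<^sub>F R in at_top. indicat_real {-R..R} y *\<^sub>R f y = f y"
      using eventually_ge_at_top[of "\<bar>y\<bar>"] by eventually_elim (auto simp: indicator_def)
  qed
qed (use f in \<open>auto simp: indicator_def\<close>)

lemma rectangle_contour_integral:
  fixes h :: "complex \<Rightarrow> complex"
  assumes hol: "h holomorphic_on {s. 0 < Re s}" and c: "0 < c" "c \<le> c'" and ab: "a < b"
  shows "\<i> * (integral {a..b} (\<lambda>y. h (Complex c' y)) - integral {a..b} (\<lambda>y. h (Complex c y)))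
       = contour_integral (linepath (Complex c b) (Complex c' b)) h
       - contour_integral (linepath (Complex c a) (Complex c' a)) h"
proof -
  let ?H = "{s. 0 < Re s}"
  have seg: "closed_segment p q \<subseteq> ?H" if "0 < Re p" "0 < Re q" for p q
    by (rule closed_segment_subset) (use that convex_halfspace_Re_gt in auto)
  have int: "h contour_integrable_on linepath p q" if "0 < Re p" "0 < Re q" for p q
    by (rule contour_integrable_continuous_linepath, rule continuous_on_subset[OF _ seg])
       (use that holomorphic_on_imp_continuous_on[OF hol] in auto)
  have "path_image (rectpath (Complex c a) (Complex c' b)) \<subseteq> ?H"
    using path_image_rectpath_subset_cbox[of "Complex c a" "Complex c' b"] c ab
    by (auto simp: in_cbox_complex_iff)
  then have "contour_integral (rectpath (Complex c a) (Complex c' b)) h = 0"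
    by (intro contour_integral_unique Cauchy_theorem_convex_simple[OF hol convex_halfspace_Re_gt]) auto
  moreover have "contour_integral (rectpath (Complex c a) (Complex c' b)) h
      = contour_integral (linepath (Complex c a) (Complex c' a)) h
      + (contour_integral (linepath (Complex c' a) (Complex c' b)) h
      + (contour_integral (linepath (Complex c' b) (Complex c b)) h
      + contour_integral (linepath (Complex c b) (Complex c a)) h))"
    unfolding rectpath_def Let_def using c by (simp add: int contour_integrable_joinI)
  moreover have rev: "contour_integral (linepath q p) h = - contour_integral (linepath p q) h"
    if "0 < Re p" "0 < Re q" for p q
    using that seg holomorphic_on_imp_continuous_on[OF hol]
    by (intro contour_integral_reverse_linepath) (auto intro: continuous_on_subset)
  note rev[of "Complex c b" "Complex c' b"] rev[of "Complex c a" "Complex c b"]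
  ultimately have "contour_integral (linepath (Complex c a) (Complex c' a)) h
      + contour_integral (linepath (Complex c' a) (Complex c' b)) h
      - contour_integral (linepath (Complex c b) (Complex c' b)) h
      - contour_integral (linepath (Complex c a) (Complex c b)) h = 0"
    using c by (simp add: algebra_simps)
  moreover have "contour_integral (linepath (Complex x a) (Complex x b)) h
      = \<i> * integral {a..b} (\<lambda>y. h (Complex x y))" for x
    using ab by (intro contour_integral_linepath_same_Re) auto
  ultimately show ?thesis by (simp add: algebra_simps)
qed

lemma tendsto_integral_vertical_line:
  fixes h :: "complex \<Rightarrow> complex"
  assumes "continuous_on {s. 0 < Re s} h" "0 < x" "integrable lborel (\<lambda>y. h (Complex x y))"
  shows "((\<lambda>R. integral {-R..R} (\<lambda>y. h (Complex x y))) \<longlongrightarrow> (LBINT y. h (Complex x y))) at_top"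
proof -
  have "continuous_on UNIV (Complex x)"
    unfolding Complex_eq by (intro continuous_intros)
  then have "continuous_on UNIV (\<lambda>y. h (Complex x y))"
    by (rule continuous_on_compose2[OF assms(1)]) (use assms(2) in auto)
  then have "(\<lambda>R. integral {-R..R} (\<lambda>y. h (Complex x y))) = (\<lambda>R. LINT y:{-R..R}|lborel. h (Complex x y))"
    by (intro ext set_borel_integral_eq_integral(2)[symmetric] borel_integrable_atLeastAtMost')
       (auto intro: continuous_on_subset)
  then show ?thesis using tendsto_set_integral_symmetric[OF assms(3)] by simp
qed

lemma norm_contour_integral_horizontal_le:
  fixes h :: "complex \<Rightarrow> complex"
  assumes cont: "continuous_on {s. 0 < Re s} h" and c: "0 < c" "c \<le> c'"
    and bound: "\<And>x. c \<le> x \<Longrightarrow> x \<le> c' \<Longrightarrow> norm (h (Complex x y)) \<le> B"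
  shows "norm (contour_integral (linepath (Complex c y) (Complex c' y)) h) \<le> B * (c' - c)"
proof -
  have seg: "closed_segment (Complex c y) (Complex c' y) = {z. Im z = y \<and> Re z \<in> {c..c'}}"
    using c by (simp add: closed_segment_same_Im closed_segment_eq_real_ivl)
  have "norm (contour_integral (linepath (Complex c y) (Complex c' y)) h)
      \<le> B * norm (Complex c' y - Complex c y)"
  proof (rule contour_integral_bound_linepath)
    show "h contour_integrable_on linepath (Complex c y) (Complex c' y)"
      using c seg by (intro contour_integrable_continuous_linepath continuous_on_subset[OF cont]) auto
    show "0 \<le> B" using bound[of c] c norm_ge_zero order_trans by blast
    show "norm (h z) \<le> B" if "z \<in> closed_segment (Complex c y) (Complex c' y)" for z
    proof -
      have "norm (h (Complex (Re z) (Im z))) \<le> B" using that seg bound by auto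
      then show ?thesis by simp
    qed
  qed
  also have "norm (Complex c' y - Complex c y) = c' - c"
    using c by (simp add: Complex_eq norm_of_real flip: of_real_diff)
  finally show ?thesis .
qed

lemma integral_vertical_line_shift:
  fixes h :: "complex \<Rightarrow> complex" and g :: "real \<Rightarrow> real"
  assumes hol: "h holomorphic_on {s. 0 < Re s}" and c: "0 < c" "c \<le> c'"
    and int: "\<And>x. x \<in> {c, c'} \<Longrightarrow> integrable lborel (\<lambda>y. h (Complex x y))"
    and bound: "\<And>x y. c \<le> x \<Longrightarrow> x \<le> c' \<Longrightarrow> norm (h (Complex x y)) \<le> g \<bar>y\<bar>"
    and g: "(g \<longlongrightarrow> 0) at_top"
  shows "(LBINT y. h (Complex c y)) = (LBINT y. h (Complex c' y))"
proof -
  define V where "V x R = integral {-R..R} (\<lambda>y. h (Complex x y))" for x R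
  define H where "H y = contour_integral (linepath (Complex c y) (Complex c' y)) h" for y
  have cont: "continuous_on {s. 0 < Re s} h" using hol by (rule holomorphic_on_imp_continuous_on)
  have H: "norm (H r) \<le> g \<bar>r\<bar> * (c' - c)" for r
    unfolding H_def by (rule norm_contour_integral_horizontal_le[OF cont c bound])
  have "((\<lambda>R. H R - H (- R)) \<longlongrightarrow> 0) at_top"
  proof (rule Lim_null_comparison)
    show "\<forall>\<^sub>F R in at_top. norm (H R - H (- R)) \<le> 2 * g R * (c' - c)"
      using eventually_ge_at_top[of 0]
    proof eventually_elim
      case (elim R)
      have "norm (H R - H (- R)) \<le> norm (H R) + norm (H (- R))" by (rule norm_triangle_ineq4)
      also have "\<dots> \<le> 2 * g R * (c' - c)" using H[of R] H[of "- R"] elim by simp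
      finally show ?case .
    qed
    show "((\<lambda>R. 2 * g R * (c' - c)) \<longlongrightarrow> 0) at_top"
      using tendsto_mult_right_zero[OF tendsto_mult_left_zero[OF g], of 2 "c' - c"]
      by (simp add: mult.assoc)
  qed
  moreover have "\<forall>\<^sub>F R in at_top. H R - H (- R) = \<i> * (V c' R - V c R)"
    using eventually_gt_at_top[of 0]
    by eventually_elim (unfold V_def H_def, rule rectangle_contour_integral[OF hol c, symmetric], simp)
  ultimately have "((\<lambda>R. \<i> * (V c' R - V c R)) \<longlongrightarrow> 0) at_top"
    by (rule Lim_transform_eventually)
  moreover have "((\<lambda>R. \<i> * (V c' R - V c R)) \<longlongrightarrow>
      \<i> * ((LBINT y. h (Complex c' y)) - (LBINT y. h (Complex c y)))) at_top"
    unfolding V_def using c int by (intro tendsto_intros tendsto_integral_vertical_line[OF cont]) auto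
  ultimately show ?thesis
    using tendsto_unique[OF trivial_limit_at_top_linorder] by fastforce
qed

lemma bromwich_eq_integral:
  "bromwich c F t = (LBINT y. exp (Complex c y * of_real t) * F (Complex c y)) / of_real (2 * pi)"
  unfolding bromwich_def by simp

lemma bromwich_cmult: "bromwich c (\<lambda>s. k * F s) t = k * bromwich c F t"
  unfolding bromwich_eq_integral by (simp add: mult.left_commute)

lemma bromwich_rescale:
  assumes a: "0 < a"
  shows "bromwich c F (t / a) = of_real a * bromwich (c / a) (\<lambda>s. F (of_real a * s)) t"
proof -
  have scale: "Complex c (0 + a * y) = of_real a * Complex (c / a) y" for y
    using a by (simp add: complex_eq_iff)
  have "(LBINT y. exp (Complex c y * of_real (t / a)) * F (Complex c y))
      = \<bar>a\<bar> *\<^sub>R (LBINT y. exp (Complex c (0 + a * y) * of_real (t / a)) * F (Complex c (0 + a * y)))"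
    using a by (intro lborel_integral_real_affine) simp
  also have "\<dots> = of_real a * (LBINT y. exp (Complex (c / a) y * of_real t) * F (of_real a * Complex (c / a) y))"
    unfolding scale using a by (simp add: scaleR_conv_of_real)
  finally show ?thesis unfolding bromwich_eq_integral by simp
qed

lemma bromwich_shift:
  fixes F :: "complex \<Rightarrow> complex" and g :: "real \<Rightarrow> real"
  assumes hol: "F holomorphic_on {s. 0 < Re s}" and c: "0 < c" "c \<le> c'"
    and int: "\<And>x. x \<in> {c, c'} \<Longrightarrow> integrable lborel (\<lambda>y. exp (Complex x y * of_real t) * F (Complex x y))"
    and bound: "\<And>x y. c \<le> x \<Longrightarrow> x \<le> c' \<Longrightarrow> norm (F (Complex x y)) \<le> g \<bar>y\<bar>"
    and g: "(g \<longlongrightarrow> 0) at_top"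
  shows "bromwich c F t = bromwich c' F t"
proof -
  have "(LBINT y. exp (Complex c y * of_real t) * F (Complex c y))
      = (LBINT y. exp (Complex c' y * of_real t) * F (Complex c' y))"
  proof (rule integral_vertical_line_shift[where h = "\<lambda>s. exp (s * of_real t) * F s"])
    show "(\<lambda>s. exp (s * of_real t) * F s) holomorphic_on {s. 0 < Re s}"
      using hol by (intro holomorphic_intros)
    show "norm (exp (Complex x y * of_real t) * F (Complex x y)) \<le> exp (c' * \<bar>t\<bar>) * g \<bar>y\<bar>"
      if "c \<le> x" "x \<le> c'" for x y
    proof -
      have "x * t \<le> x * \<bar>t\<bar>" using that c by (intro mult_left_mono) auto
      also have "\<dots> \<le> c' * \<bar>t\<bar>" using that by (intro mult_right_mono) auto
      finally show ?thesis
        using bound[OF that, of y] by (simp add: norm_mult mult_mono)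
    qed
    show "((\<lambda>r. exp (c' * \<bar>t\<bar>) * g r) \<longlongrightarrow> 0) at_top"
      using tendsto_mult_right_zero[OF g] by simp
  qed (use c int in auto)
  then show ?thesis unfolding bromwich_eq_integral by simp
qed

section \<open>The Laplace-domain functions of \<open>K\<close> and \<open>f\<close>\<close>

definition powr_exp_powr :: "real \<Rightarrow> real \<Rightarrow> real \<Rightarrow> complex \<Rightarrow> complex" where
  "powr_exp_powr \<rho> u \<nu> s = s powr - of_real \<rho> * exp (- of_real u * s powr of_real \<nu>)"

lemma K_nm_eq_bromwich: "K_nm c \<nu> \<mu> t u = bromwich c (powr_exp_powr \<mu> u \<nu>) t"
  unfolding K_nm_def powr_exp_powr_def ..

lemma f_nr_eq_bromwich: "f_nr c \<nu> \<rho> t = bromwich c (powr_exp_powr \<rho> 1 \<nu>) t"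
  unfolding f_nr_def powr_exp_powr_def by simp

lemma holomorphic_powr_exp_powr: "powr_exp_powr \<rho> u \<nu> holomorphic_on {s. 0 < Re s}"
  unfolding powr_exp_powr_def by (intro holomorphic_intros) (auto simp: complex_nonpos_Reals_iff)

lemma powr_exp_powr_rescale:
  assumes "0 < a"
  shows "powr_exp_powr \<rho> u \<nu> (of_real a * s) = of_real (a powr - \<rho>) * powr_exp_powr \<rho> (u * a powr \<nu>) \<nu> s"
proof -
  have "(of_real a * s) powr of_real r = of_real (a powr r) * s powr of_real r" for r
    using assms by (simp add: powr_times_real_left powr_of_real)
  from this[of "- \<rho>"] this[of \<nu>] show ?thesis
    unfolding powr_exp_powr_def by (simp add: mult_ac)
qed

lemma norm_powr_exp_powr_le:
  assumes s: "0 < Re s" and "0 \<le> \<rho>" "0 \<le> u" "0 \<le> \<nu>" "\<nu> \<le> 1"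
  shows "norm (powr_exp_powr \<rho> u \<nu> s) \<le> Re s powr - \<rho> * exp (- u * cos (\<nu> * pi / 2) * norm s powr \<nu>)"
proof -
  have "norm (s powr - of_real \<rho>) = norm s powr - \<rho>"
    by (simp add: norm_powr_real_powr')
  also have "\<dots> \<le> Re s powr - \<rho>"
    using assms complex_Re_le_cmod[of s] by (intro powr_mono2') auto
  finally have "norm (s powr - of_real \<rho>) \<le> Re s powr - \<rho>" .
  moreover have "u * (cos (\<nu> * pi / 2) * norm s powr \<nu>) \<le> u * Re (s powr of_real \<nu>)"
    using assms cos_mult_norm_powr_le_Re_powr by (intro mult_left_mono) auto
  ultimately show ?thesis
    unfolding powr_exp_powr_def norm_mult by (intro mult_mono) (auto simp: mult.assoc)
qed

lemma cos_mult_pi_half_nonneg: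
  fixes \<nu> :: real
  assumes "0 \<le> \<nu>" "\<nu> \<le> 1"
  shows "0 \<le> cos (\<nu> * pi / 2)"
proof -
  have "0 \<le> \<nu> * pi" "\<nu> * pi \<le> 1 * pi" using assms by (auto intro: mult_right_mono)
  then show ?thesis using pi_gt_zero by (intro cos_ge_zero) linarith+
qed

lemma norm_powr_exp_powr_vertical_le:
  assumes "0 < x" "0 \<le> \<rho>" "0 \<le> u" "0 \<le> \<nu>" "\<nu> \<le> 1"
  shows "norm (powr_exp_powr \<rho> u \<nu> (Complex x y))
    \<le> x powr - \<rho> * exp (- (u * cos (\<nu> * pi / 2)) * \<bar>y\<bar> powr \<nu>)"
proof -
  have "u * cos (\<nu> * pi / 2) * \<bar>y\<bar> powr \<nu> \<le> u * cos (\<nu> * pi / 2) * norm (Complex x y) powr \<nu>"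
    using assms abs_Im_le_cmod[of "Complex x y"] cos_mult_pi_half_nonneg[of \<nu>]
    by (intro mult_left_mono powr_mono2) auto
  moreover have "norm (powr_exp_powr \<rho> u \<nu> (Complex x y))
      \<le> x powr - \<rho> * exp (- u * cos (\<nu> * pi / 2) * norm (Complex x y) powr \<nu>)"
    using norm_powr_exp_powr_le[of "Complex x y" \<rho> u \<nu>] assms by simp
  ultimately show ?thesis
    by (elim order_trans) (intro mult_left_mono, auto)
qed

lemma integrable_bromwich_integrand_powr_exp_powr:
  assumes "0 < x" "0 \<le> \<rho>" "0 < u" "0 < \<nu>" "\<nu> < 1"
  shows "integrable lborel (\<lambda>y. exp (Complex x y * of_real t) * powr_exp_powr \<rho> u \<nu> (Complex x y))"
proof (rule Bochner_Integration.integrable_bound)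
  have "0 < cos (\<nu> * pi / 2)" using assms by (intro cos_gt_zero) auto
  then show "integrable lborel (\<lambda>y. exp (x * t) * x powr - \<rho> * exp (- (u * cos (\<nu> * pi / 2)) * \<bar>y\<bar> powr \<nu>))"
    using assms by (intro integrable_mult_right integrable_exp_neg_abs_powr) auto
  show "(\<lambda>y. exp (Complex x y * of_real t) * powr_exp_powr \<rho> u \<nu> (Complex x y)) \<in> borel_measurable lborel"
    unfolding powr_exp_powr_def Complex_eq by measurable
  show "AE y in lborel. norm (exp (Complex x y * of_real t) * powr_exp_powr \<rho> u \<nu> (Complex x y))
      \<le> norm (exp (x * t) * x powr - \<rho> * exp (- (u * cos (\<nu> * pi / 2)) * \<bar>y\<bar> powr \<nu>))"
    using norm_powr_exp_powr_vertical_le[of x \<rho> u \<nu>] assms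
    by (intro AE_I2) (auto simp: norm_mult mult.assoc intro!: mult_left_mono)
qed

lemma bromwich_powr_exp_powr_shift:
  assumes c: "0 < c" "0 < c'" and "0 \<le> \<rho>" "0 < u" "0 < \<nu>" "\<nu> < 1"
  shows "bromwich c (powr_exp_powr \<rho> u \<nu>) t = bromwich c' (powr_exp_powr \<rho> u \<nu>) t"
proof -
  define k where "k = u * cos (\<nu> * pi / 2)"
  have k: "0 < k" unfolding k_def using assms by (intro mult_pos_pos cos_gt_zero) auto
  have "bromwich c (powr_exp_powr \<rho> u \<nu>) t = bromwich c' (powr_exp_powr \<rho> u \<nu>) t"
    if "0 < c" "c \<le> c'" for c c'
  proof (rule bromwich_shift[OF holomorphic_powr_exp_powr that,
        where g = "\<lambda>r. c powr - \<rho> * exp (- k * r powr \<nu>)"])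
    show "integrable lborel (\<lambda>y. exp (Complex x y * of_real t) * powr_exp_powr \<rho> u \<nu> (Complex x y))"
      if "x \<in> {c, c'}" for x
      using that \<open>0 < c\<close> \<open>c \<le> c'\<close> assms by (intro integrable_bromwich_integrand_powr_exp_powr) auto
    show "norm (powr_exp_powr \<rho> u \<nu> (Complex x y)) \<le> c powr - \<rho> * exp (- k * \<bar>y\<bar> powr \<nu>)"
      if "c \<le> x" "x \<le> c'" for x y
      using that \<open>0 < c\<close> assms unfolding k_def
      by (intro order_trans[OF norm_powr_exp_powr_vertical_le] mult_right_mono powr_mono2') auto
    show "((\<lambda>r. c powr - \<rho> * exp (- k * r powr \<nu>)) \<longlongrightarrow> 0) at_top"
      using k assms by real_asymp
  qed
  then show ?thesis using c by (metis linorder_le_cases)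
qed

lemma f_nr_rescale:
  assumes "0 < a"
  shows "f_nr c \<nu> \<rho> (t / a) = of_real (a powr (1 - \<rho>)) * bromwich (c / a) (powr_exp_powr \<rho> (a powr \<nu>) \<nu>) t"
proof -
  have "a * a powr - \<rho> = a powr (1 - \<rho>)" using assms by (simp add: powr_diff powr_minus field_simps)
  then show ?thesis
    unfolding f_nr_eq_bromwich bromwich_rescale[OF assms] powr_exp_powr_rescale[OF assms] bromwich_cmult
    by (simp flip: of_real_mult)
qed

section \<open>Exchanging the order of integration\<close>

lemma integrable_pair_lborel_mult:
  fixes f g :: "real \<Rightarrow> real"
  assumes f: "integrable lborel f" and g: "integrable lborel g"
  shows "integrable (lborel \<Otimes>\<^sub>M lborel) (\<lambda>(x, y). f x * g y)"
proof (rule lborel_pair.Fubini_integrable)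
  have [measurable]: "f \<in> borel_measurable borel" "g \<in> borel_measurable borel"
    using f g by auto
  show "(\<lambda>(x, y). f x * g y) \<in> borel_measurable (lborel \<Otimes>\<^sub>M lborel)" by measurable
  have "(\<lambda>x. LBINT y. norm (f x * g y)) = (\<lambda>x. \<bar>f x\<bar> * (LBINT y. \<bar>g y\<bar>))"
    by (simp add: abs_mult)
  then show "integrable lborel (\<lambda>x. LBINT y. norm (case (x, y) of (x, y) \<Rightarrow> f x * g y))"
    using f by simp
  show "AE x in lborel. integrable lborel (\<lambda>y. case (x, y) of (x, y) \<Rightarrow> f x * g y)"
    using g by simp
qed

lemma set_integral_powr_mult_powr_exp_powr:
  assumes s: "0 < Re s" and \<mu>: "-1 < \<mu>" and \<nu>: "0 \<le> \<nu>" "\<nu> \<le> 1"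
  shows "(LINT u:{lam..}|lborel. of_real ((u - lam) powr \<mu> / Gamma (\<mu> + 1)) * powr_exp_powr \<mu> u \<nu> s)
    = powr_exp_powr (\<nu> + \<nu> * \<mu> + \<mu>) lam \<nu> s"
proof -
  define w where "w = s powr of_real \<nu>"
  have w: "0 < Re w" unfolding w_def using Re_powr_pos[OF s \<nu>] .
  have "0 < Gamma (\<mu> + 1)" using \<mu> by (intro Gamma_real_pos) simp
  then have \<Gamma>: "Gamma (\<mu> + 1) \<noteq> 0" by simp
  have "(LINT u:{lam..}|lborel. of_real ((u - lam) powr \<mu> / Gamma (\<mu> + 1)) * powr_exp_powr \<mu> u \<nu> s)
    = s powr - of_real \<mu> / of_real (Gamma (\<mu> + 1))
      * (LINT u:{lam..}|lborel. of_real ((u - lam) powr \<mu>) * exp (- of_real u * w))"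
    unfolding set_lebesgue_integral_def powr_exp_powr_def w_def
    by (simp flip: integral_mult_right_zero add: mult_ac)
  also have "\<dots> = s powr - of_real \<mu> * w powr - of_real (\<mu> + 1) * exp (- of_real lam * w)"
    unfolding set_integral_shifted_powr_mult_exp laplace_powr_eq[OF w \<mu>] using \<Gamma> by simp
  also have "s powr - of_real \<mu> * w powr - of_real (\<mu> + 1) = s powr - of_real (\<nu> + \<nu> * \<mu> + \<mu>)"
    unfolding w_def powr_powr_right_half_plane[OF s \<nu>]
    by (simp add: powr_add[symmetric] algebra_simps)
  finally show ?thesis by (simp add: powr_exp_powr_def w_def)
qed

lemma norm_powr_mult_bromwich_integrand_le:
  assumes c: "0 < c" and \<mu>: "0 \<le> \<mu>" and lam: "0 < lam" "lam \<le> u" and \<nu>: "0 \<le> \<nu>" "\<nu> \<le> 1"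
  defines "\<kappa> \<equiv> cos (\<nu> * pi / 2)"
  shows "norm (of_real ((u - lam) powr \<mu> / Gamma (\<mu> + 1)) *
      (exp (Complex c y * of_real t) * powr_exp_powr \<mu> u \<nu> (Complex c y)))
    \<le> exp (c * t) * c powr - \<mu> / Gamma (\<mu> + 1) *
      ((u - lam) powr \<mu> * exp (- (\<kappa> * c powr \<nu> / 2) * u) * exp (- (lam * \<kappa> / 2) * \<bar>y\<bar> powr \<nu>))"
proof -
  let ?s = "Complex c y"
  have \<kappa>: "0 \<le> \<kappa>" unfolding \<kappa>_def using \<nu> by (rule cos_mult_pi_half_nonneg)
  have \<Gamma>: "0 < Gamma (\<mu> + 1)" using \<mu> by (intro Gamma_real_pos) simp
  have "c powr \<nu> \<le> norm ?s powr \<nu>" "\<bar>y\<bar> powr \<nu> \<le> norm ?s powr \<nu>"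
    using c \<nu> abs_Re_le_cmod[of ?s] abs_Im_le_cmod[of ?s] by (auto intro: powr_mono2)
  then have "(u / 2) * (\<kappa> * c powr \<nu>) + (lam / 2) * (\<kappa> * \<bar>y\<bar> powr \<nu>) \<le>
      (u / 2) * (\<kappa> * norm ?s powr \<nu>) + (u / 2) * (\<kappa> * norm ?s powr \<nu>)"
    using assms \<kappa> by (intro add_mono mult_mono mult_left_mono) auto
  then have "exp (- u * \<kappa> * norm ?s powr \<nu>)
      \<le> exp (- (\<kappa> * c powr \<nu> / 2) * u) * exp (- (lam * \<kappa> / 2) * \<bar>y\<bar> powr \<nu>)"
    by (simp add: field_simps flip: exp_add)
  moreover have "norm (powr_exp_powr \<mu> u \<nu> ?s) \<le> c powr - \<mu> * exp (- u * \<kappa> * norm ?s powr \<nu>)"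
    using norm_powr_exp_powr_le[of ?s \<mu> u \<nu>] assms unfolding \<kappa>_def by simp
  ultimately have "norm (powr_exp_powr \<mu> u \<nu> ?s)
      \<le> c powr - \<mu> * (exp (- (\<kappa> * c powr \<nu> / 2) * u) * exp (- (lam * \<kappa> / 2) * \<bar>y\<bar> powr \<nu>))"
    by (elim order_trans) (intro mult_left_mono, auto)
  then have "(u - lam) powr \<mu> / Gamma (\<mu> + 1) * exp (c * t) * norm (powr_exp_powr \<mu> u \<nu> ?s)
      \<le> (u - lam) powr \<mu> / Gamma (\<mu> + 1) * exp (c * t) *
        (c powr - \<mu> * (exp (- (\<kappa> * c powr \<nu> / 2) * u) * exp (- (lam * \<kappa> / 2) * \<bar>y\<bar> powr \<nu>)))"
    using \<Gamma> by (intro mult_left_mono) auto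
  then show ?thesis
    using \<Gamma> lam by (simp add: norm_mult norm_divide mult_ac)
qed

lemma integrable_powr_mult_bromwich_integrand:
  assumes \<mu>: "0 \<le> \<mu>" and \<nu>: "0 < \<nu>" "\<nu> < 1" and lam: "0 < lam" and c: "0 < c"
  shows "integrable (lborel \<Otimes>\<^sub>M lborel) (\<lambda>(u, y). indicat_real {lam..} u *\<^sub>R
    (of_real ((u - lam) powr \<mu> / Gamma (\<mu> + 1)) *
      (exp (Complex c y * of_real t) * powr_exp_powr \<mu> u \<nu> (Complex c y))))"
proof (rule Bochner_Integration.integrable_bound)
  define \<kappa> where "\<kappa> = cos (\<nu> * pi / 2)"
  define K where "K = exp (c * t) * c powr - \<mu> / Gamma (\<mu> + 1)"
  define A where "A = (\<lambda>u. indicat_real {lam..} u * ((u - lam) powr \<mu> * exp (- (\<kappa> * c powr \<nu> / 2) * u)))"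
  define B where "B = (\<lambda>y. exp (- (lam * \<kappa> / 2) * \<bar>y\<bar> powr \<nu>))"
  have \<kappa>: "0 < \<kappa>" unfolding \<kappa>_def using \<nu> by (intro cos_gt_zero) auto
  have "integrable lborel A"
    using set_integrable_shifted_powr_exp_neg[of "\<kappa> * c powr \<nu> / 2" \<mu> lam] \<kappa> c \<mu>
    by (simp add: A_def set_integrable_def)
  moreover have "integrable lborel B"
    unfolding B_def using \<kappa> lam \<nu> by (intro integrable_exp_neg_abs_powr) auto
  ultimately show "integrable (lborel \<Otimes>\<^sub>M lborel) (\<lambda>x. K * (case x of (u, y) \<Rightarrow> A u * B y))"
    by (intro integrable_mult_right integrable_pair_lborel_mult)
  show "(\<lambda>(u, y). indicat_real {lam..} u *\<^sub>R (of_real ((u - lam) powr \<mu> / Gamma (\<mu> + 1)) *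
      (exp (Complex c y * of_real t) * powr_exp_powr \<mu> u \<nu> (Complex c y))))
    \<in> borel_measurable (lborel \<Otimes>\<^sub>M lborel)"
    unfolding powr_exp_powr_def Complex_eq by measurable
  have "0 < Gamma (\<mu> + 1)" using \<mu> by (intro Gamma_real_pos) simp
  then show "AE x in lborel \<Otimes>\<^sub>M lborel. norm (case x of (u, y) \<Rightarrow> indicat_real {lam..} u *\<^sub>R
      (of_real ((u - lam) powr \<mu> / Gamma (\<mu> + 1)) *
        (exp (Complex c y * of_real t) * powr_exp_powr \<mu> u \<nu> (Complex c y))))
    \<le> norm (K * (case x of (u, y) \<Rightarrow> A u * B y))"
    using norm_powr_mult_bromwich_integrand_le[OF c \<mu> lam, where \<nu> = \<nu> and t = t] \<nu>
    by (intro AE_I2) (auto simp: A_def B_def K_def \<kappa>_def indicator_def mult_ac)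
qed

lemma has_integral_powr_mult_bromwich:
  assumes \<mu>: "0 \<le> \<mu>" and \<nu>: "0 < \<nu>" "\<nu> < 1" and lam: "0 < lam" and c: "0 < c"
  shows "((\<lambda>u. of_real ((u - lam) powr \<mu> / Gamma (\<mu> + 1)) * bromwich c (powr_exp_powr \<mu> u \<nu>) t)
    has_integral bromwich c (powr_exp_powr (\<nu> + \<nu> * \<mu> + \<mu>) lam \<nu>) t) {lam..}"
proof -
  define G where "G u y = indicat_real {lam..} u *\<^sub>R (of_real ((u - lam) powr \<mu> / Gamma (\<mu> + 1)) *
    (exp (Complex c y * of_real t) * powr_exp_powr \<mu> u \<nu> (Complex c y)))" for u y
  define \<phi> where "\<phi> u = of_real ((u - lam) powr \<mu> / Gamma (\<mu> + 1)) * bromwich c (powr_exp_powr \<mu> u \<nu>) t"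
    for u
  have int: "integrable (lborel \<Otimes>\<^sub>M lborel) (\<lambda>(u, y). G u y)"
    unfolding G_def by (rule integrable_powr_mult_bromwich_integrand[OF \<mu> \<nu> lam c])
  have \<phi>: "indicat_real {lam..} u *\<^sub>R \<phi> u = (LBINT y. G u y) / of_real (2 * pi)" for u
    unfolding \<phi>_def G_def bromwich_eq_integral by (simp add: scaleR_conv_of_real)
  have inner: "(LBINT u. G u y) = exp (Complex c y * of_real t) *
      powr_exp_powr (\<nu> + \<nu> * \<mu> + \<mu>) lam \<nu> (Complex c y)" for y
  proof -
    have "(LBINT u. G u y) = exp (Complex c y * of_real t) * (LINT u:{lam..}|lborel.
        of_real ((u - lam) powr \<mu> / Gamma (\<mu> + 1)) * powr_exp_powr \<mu> u \<nu> (Complex c y))"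
      unfolding G_def set_lebesgue_integral_def by (simp flip: integral_mult_right_zero add: mult_ac)
    also have "(LINT u:{lam..}|lborel. of_real ((u - lam) powr \<mu> / Gamma (\<mu> + 1)) *
        powr_exp_powr \<mu> u \<nu> (Complex c y)) = powr_exp_powr (\<nu> + \<nu> * \<mu> + \<mu>) lam \<nu> (Complex c y)"
      using c \<mu> \<nu> by (intro set_integral_powr_mult_powr_exp_powr) auto
    finally show ?thesis .
  qed
  have "set_integrable lborel {lam..} \<phi>"
    unfolding set_integrable_def \<phi> using lborel_pair.integrable_fst[OF int] by simp
  moreover have "(LINT u:{lam..}|lborel. \<phi> u) = bromwich c (powr_exp_powr (\<nu> + \<nu> * \<mu> + \<mu>) lam \<nu>) t"
    unfolding set_lebesgue_integral_def \<phi> bromwich_eq_integral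
    using lborel_pair.Fubini_integral[OF int] by (simp add: inner)
  ultimately show ?thesis unfolding \<phi>_def[symmetric]
    by (metis has_integral_integrable_integral set_borel_integral_eq_integral)
qed

theorem mainTheorem8:
  fixes \<nu> \<mu> lam t c1 c2 :: real
  assumes "0 < \<nu>" "\<nu> < 1" "0 \<le> \<mu>" "\<mu> < 1" "0 < lam" "0 < t" "0 < c1" "0 < c2"
  shows "((\<lambda>u. of_real ((u - lam) powr \<mu> / Gamma (\<mu> + 1)) * K_nm c1 \<nu> \<mu> t u)
           has_integral
          (of_real (lam powr ((1 / \<nu> + 1) * \<mu> - 1 / \<nu> + 1))
             * f_nr c2 \<nu> (\<nu> + \<nu> * \<mu> + \<mu>) (t / lam powr (1 / \<nu>)))) {lam..}"
proof -
  define \<rho> where "\<rho> = \<nu> + \<nu> * \<mu> + \<mu>"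
  define a where "a = lam powr (1 / \<nu>)"
  have \<rho>: "0 \<le> \<rho>" and a: "0 < a" and a_powr: "a powr \<nu> = lam"
    using assms by (simp_all add: \<rho>_def a_def powr_powr)
  have exponent: "1 / \<nu> * (\<rho> - 1) = (1 / \<nu> + 1) * \<mu> - 1 / \<nu> + 1"
    using assms by (simp add: \<rho>_def field_simps)
  have "bromwich c1 (powr_exp_powr \<rho> lam \<nu>) t = bromwich (c2 / a) (powr_exp_powr \<rho> lam \<nu>) t"
    using assms a \<rho> by (intro bromwich_powr_exp_powr_shift) auto
  also have "\<dots> = of_real (a powr (\<rho> - 1)) * f_nr c2 \<nu> \<rho> (t / a)"
    using f_nr_rescale[OF a, of c2 \<nu> \<rho> t] a by (simp add: a_powr powr_add[symmetric] flip: of_real_mult)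
  also have "a powr (\<rho> - 1) = lam powr ((1 / \<nu> + 1) * \<mu> - 1 / \<nu> + 1)"
    unfolding a_def powr_powr exponent ..
  finally show ?thesis
    using has_integral_powr_mult_bromwich[of \<mu> \<nu> lam c1 t] assms
    unfolding K_nm_eq_bromwich \<rho>_def a_def by simp
qed

end
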